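(* Let $n\ge 3$ and let $O$ be an optimal acyclic matching on the $(n-2)$-skeleton $\Delta^n_{(n-2)}$ of $\Delta^n$. Let $U$ be the set of critical $(n-2)$-dimensional simplices of $O$. Let $F_0,\dots,F_n$ be the $(n-1)$-dimensional simplices of $\Delta^n$, and let $K_{n+1}$ be the complete graph on the vertex set $\{F_0,\dots,F_n\}$. Identify each $(n-2)$-simplex $u$ of $\Delta^n$ with the edge $\{F_i,F_j\}$ of $K_{n+1}$, where $F_i,F_j$ are the two $(n-1)$-simplices of $\Delta^n$ containing $u$ (this is a bijection between $(n-2)$-simplices of $\Delta^n$ and edges of $K_{n+1}$). Then $|U|=n$ and, under this identification, $U$ is the edge set of a spanning tree of $K_{n+1}$.
   Context: All simplicial complexes are finite abstract simplicial complexes; simplices are nonempty. $\Delta^n$ is the simplicial complex of all nonempty subsets of an $(n+1)$-element vertex set; $\Delta^n_{(k)}$ denotes its $k$-skeleton (simplices of dimension $\le k$). The Hasse diagram $\mathcal{H}(K)$ of $K$ is the directed graph whose vertices are the simplices of $K$, with an edge $\sigma\to\tau$ whenever $\sigma\subsetneq\tau$ and $\dim\tau=\dim\sigma+1$. A matching on $\mathcal{H}(K)$ is a set $W$ of edges of $\mathcal{H}(K)$, no two sharing a vertex; an edge $\sigma\to\tau$ in $W$ is called a pair $(\sigma,\tau)$, and a simplex lying in no pair is called critical. $W$ is acyclic if the directed graph obtained from $\mathcal{H}(K)$ by reversing every edge in $W$ has no directed cycle. An acyclic matching is optimal if it minimizes the total number of critical simplices among all acyclic matchings on $K$. *)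

theory Defs
  imports Main
begin

(* Abstract simplicial complexes: a complex is a set of nonempty finite vertex sets.
   dim s = card s - 1. *)

definition simplex_full :: "nat \<Rightarrow> nat set set" where
  "simplex_full n = {s. s \<noteq> {} \<and> s \<subseteq> {0..n}}"

definition skeleton :: "nat \<Rightarrow> nat \<Rightarrow> nat set set" where
  "skeleton n k = {s \<in> simplex_full n. card s \<le> k + 1}"

definition hasse_edges :: "'a set set \<Rightarrow> ('a set \<times> 'a set) set" where
  "hasse_edges K = {(s, t). s \<in> K \<and> t \<in> K \<and> s \<subset> t \<and> card t = card s + 1}"

definition is_matching :: "'a set set \<Rightarrow> ('a set \<times> 'a set) set \<Rightarrow> bool" where
  "is_matching K W \<longleftrightarrow> W \<subseteq> hasse_edges K \<and>
     (\<forall>p\<in>W. \<forall>q\<in>W. p \<noteq> q \<longrightarrow> {fst p, snd p} \<inter> {fst q, snd q} = {})"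

definition modified_hasse :: "'a set set \<Rightarrow> ('a set \<times> 'a set) set \<Rightarrow> ('a set \<times> 'a set) set" where
  "modified_hasse K W = (hasse_edges K - W) \<union> W\<inverse>"

definition is_acyclic_matching :: "'a set set \<Rightarrow> ('a set \<times> 'a set) set \<Rightarrow> bool" where
  "is_acyclic_matching K W \<longleftrightarrow> is_matching K W \<and> acyclic (modified_hasse K W)"

definition critical :: "'a set set \<Rightarrow> ('a set \<times> 'a set) set \<Rightarrow> 'a set set" where
  "critical K W = {s \<in> K. \<forall>p\<in>W. s \<noteq> fst p \<and> s \<noteq> snd p}"

definition is_optimal_matching :: "'a set set \<Rightarrow> ('a set \<times> 'a set) set \<Rightarrow> bool" where
  "is_optimal_matching K W \<longleftrightarrow> is_acyclic_matching K W \<and>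
     (\<forall>W'. is_acyclic_matching K W' \<longrightarrow> card (critical K W) \<le> card (critical K W'))"

definition is_graph :: "'v set \<Rightarrow> 'v set set \<Rightarrow> bool" where
  "is_graph V E \<longleftrightarrow> (\<forall>e\<in>E. e \<subseteq> V \<and> card e = 2)"

definition adj :: "'v set set \<Rightarrow> ('v \<times> 'v) set" where
  "adj E = {(x, y). {x, y} \<in> E \<and> x \<noteq> y}"

definition graph_connected :: "'v set \<Rightarrow> 'v set set \<Rightarrow> bool" where
  "graph_connected V E \<longleftrightarrow> (\<forall>x\<in>V. \<forall>y\<in>V. (x, y) \<in> (adj E)\<^sup>*)"

definition has_cycle :: "'v set set \<Rightarrow> bool" where
  "has_cycle E \<longleftrightarrow> (\<exists>vs. length vs \<ge> 3 \<and> distinct vs \<and>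
      (\<forall>i < length vs - 1. {vs ! i, vs ! (i + 1)} \<in> E) \<and> {last vs, hd vs} \<in> E)"

definition is_spanning_tree :: "'v set \<Rightarrow> 'v set set \<Rightarrow> bool" where
  "is_spanning_tree V T \<longleftrightarrow> is_graph V T \<and> graph_connected V T \<and> \<not> has_cycle T"

(* facets of Delta^n: the (n-1)-simplices, i.e. vertex sets of size n; these are the
   vertices of K_{n+1} *)
definition facets :: "nat \<Rightarrow> nat set set" where
  "facets n = {F \<in> simplex_full n. card F = n}"

(* identification of an (n-2)-simplex u with the edge {F_i,F_j} of K_{n+1}:
   the set of facets containing u *)
definition edge_of :: "nat \<Rightarrow> nat set \<Rightarrow> nat set set" where
  "edge_of n u = {F \<in> facets n. u \<subseteq> F}"

end

(* An optimal acyclic matching on the (n-2)-skeleton of the n-simplex has at most n + 1 critical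
   simplices, since the cone matching towards the vertex 0 achieves that, and one of them is a
   vertex, because every acyclic matching leaves a vertex critical.  So there are at most n critical
   ridges.  Conversely, for every partition of the facets into two nonempty classes some critical
   ridge has its two facets in different classes: otherwise every such ridge is matched with one of
   its faces, through which a gradient path leads to another such ridge, contradicting acyclicity.
   A graph on n + 1 vertices with at most n edges that cross every cut is a spanning tree. *)

theory Submission
  imports Defs
begin

definition every_cut_crossed :: "'v set \<Rightarrow> 'v set set \<Rightarrow> bool" where
  "every_cut_crossed V E \<longleftrightarrow>
     (\<forall>S. S \<subseteq> V \<and> S \<noteq> {} \<and> S \<noteq> V \<longrightarrow> (\<exists>a\<in>S. \<exists>b\<in>V - S. {a, b} \<in> E))"

(* Prim's algorithm: grow S along crossing edges. *)
lemma every_cut_crossed_ex_subset: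
  assumes "finite V" "every_cut_crossed V E" "k < card V"
  shows "\<exists>S\<subseteq>V. card S = Suc k \<and> k \<le> card (E \<inter> Pow S)"
  using assms(3)
proof (induction k)
  case 0
  then obtain x where "x \<in> V" by fastforce
  then show ?case by (intro exI[of _ "{x}"]) auto
next
  case (Suc k)
  then obtain S where S: "S \<subseteq> V" "card S = Suc k" "k \<le> card (E \<inter> Pow S)" by auto
  have "S \<noteq> {}" "S \<noteq> V" using S Suc.prems by auto
  then obtain a b where ab: "a \<in> S" "b \<in> V - S" "{a, b} \<in> E"
    using assms(2) S(1) unfolding every_cut_crossed_def by blast
  have "finite S" using S(1) assms(1) finite_subset by blast
  have "insert {a, b} (E \<inter> Pow S) \<subseteq> E \<inter> Pow (insert b S)" using ab by auto
  then have "card (insert {a, b} (E \<inter> Pow S)) \<le> card (E \<inter> Pow (insert b S))"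
    using \<open>finite S\<close> by (intro card_mono) auto
  moreover have "{a, b} \<notin> Pow S" using ab by auto
  ultimately have "Suc k \<le> card (E \<inter> Pow (insert b S))"
    using S(3) \<open>finite S\<close> by simp
  moreover have "card (insert b S) = Suc (Suc k)" using ab S \<open>finite S\<close> by simp
  ultimately show ?case using ab S(1) by (intro exI[of _ "insert b S"]) auto
qed

lemma every_cut_crossed_card_le:
  assumes "finite V" "is_graph V E" "every_cut_crossed V E"
  shows "card V \<le> card E + 1"
proof (cases "V = {}")
  case False
  then have "0 < card V" using assms(1) by (simp add: card_gt_0_iff)
  then obtain S where S: "S \<subseteq> V" "card S = card V" "card V - 1 \<le> card (E \<inter> Pow S)"
    using every_cut_crossed_ex_subset[OF assms(1,3), of "card V - 1"] by auto
  have "S = V" using S(1,2) assms(1) card_subset_eq by blast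
  moreover have "E \<subseteq> Pow V" using assms(2) unfolding is_graph_def by auto
  ultimately show ?thesis using S(3) by (simp add: Int_absorb2)
qed simp

lemma every_cut_crossed_connected:
  assumes "every_cut_crossed V E"
  shows "graph_connected V E"
  unfolding graph_connected_def
proof (intro ballI)
  fix x y assume "x \<in> V" "y \<in> V"
  define S where "S = {z \<in> V. (x, z) \<in> (adj E)\<^sup>*}"
  show "(x, y) \<in> (adj E)\<^sup>*"
  proof (rule ccontr)
    assume "(x, y) \<notin> (adj E)\<^sup>*"
    then have "S \<subseteq> V \<and> S \<noteq> {} \<and> S \<noteq> V" using \<open>x \<in> V\<close> \<open>y \<in> V\<close> unfolding S_def by auto
    then obtain a b where ab: "a \<in> S" "b \<in> V - S" "{a, b} \<in> E"
      using assms unfolding every_cut_crossed_def by blast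
    then have "(a, b) \<in> adj E" unfolding adj_def S_def by auto
    with ab(1) have "(x, b) \<in> (adj E)\<^sup>*" unfolding S_def by auto
    with ab(2) show False unfolding S_def by auto
  qed
qed

lemma ex_step_change:
  "P (f 0) \<noteq> P (f m) \<Longrightarrow> \<exists>i<m. P (f i) \<noteq> P (f (Suc i))"
proof (induction m)
  case (Suc m)
  show ?case
  proof (cases "P (f m) = P (f 0)")
    case True
    with Suc.prems show ?thesis by (intro exI[of _ m]) auto
  next
    case False
    with Suc.IH obtain i where "i < m" "P (f i) \<noteq> P (f (Suc i))" by auto
    then show ?thesis by (intro exI[of _ i]) auto
  qed
qed simp

lemma every_cut_crossed_Diff_cycle_edge:
  assumes "is_graph V E" "every_cut_crossed V E" "has_cycle E"
  shows "\<exists>e\<in>E. every_cut_crossed V (E - {e})"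
proof -
  obtain vs where vs: "length vs \<ge> 3" "distinct vs"
    "\<forall>i < length vs - 1. {vs ! i, vs ! (i + 1)} \<in> E" "{last vs, hd vs} \<in> E"
    using assms(3) unfolding has_cycle_def by blast
  define m where "m = length vs - 1"
  define e where "e = {vs ! m, vs ! 0}"
  have "vs \<noteq> []" using vs(1) by auto
  then have "e = {last vs, hd vs}" unfolding e_def m_def by (simp add: hd_conv_nth last_conv_nth)
  have path_edge: "{vs ! i, vs ! Suc i} \<in> E - {e}" if "i < m" for i
  proof -
    have "inj_on (nth vs) {..<length vs}" using vs(2) by (simp add: inj_on_nth)
    moreover have "{i, Suc i} \<noteq> {m, 0}" using that vs(1) unfolding m_def by (auto simp: doubleton_eq_iff)
    ultimately have "nth vs ` {i, Suc i} \<noteq> nth vs ` {m, 0}"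
      using that unfolding m_def by (subst inj_on_image_eq_iff) auto
    then show ?thesis using vs(3) that unfolding e_def m_def by auto
  qed
  have "every_cut_crossed V (E - {e})"
    unfolding every_cut_crossed_def
  proof (intro allI impI)
    fix S assume S: "S \<subseteq> V \<and> S \<noteq> {} \<and> S \<noteq> V"
    then obtain a b where ab: "a \<in> S" "b \<in> V - S" "{a, b} \<in> E"
      using assms(2) unfolding every_cut_crossed_def by blast
    show "\<exists>a\<in>S. \<exists>b\<in>V - S. {a, b} \<in> E - {e}"
    proof (cases "{a, b} = e")
      case True
      \<comment> \<open>then the rest of the cycle, the path from vs ! 0 to vs ! m, also crosses the cut\<close>
      then have "(vs ! 0 \<in> S) \<noteq> (vs ! m \<in> S)" using ab unfolding e_def by (auto simp: doubleton_eq_iff)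
      then obtain i where "i < m" "(vs ! i \<in> S) \<noteq> (vs ! Suc i \<in> S)"
        using ex_step_change[of "\<lambda>v. v \<in> S" "nth vs"] by blast
      moreover have "vs ! i \<in> V" "vs ! Suc i \<in> V"
        using path_edge[OF \<open>i < m\<close>] assms(1) unfolding is_graph_def by auto
      moreover note path_edge[OF \<open>i < m\<close>] insert_commute[of "vs ! i" "vs ! Suc i" "{}"]
      ultimately show ?thesis by (cases "vs ! i \<in> S") fastforce+
    qed (use ab in blast)
  qed
  then show ?thesis using vs(4) \<open>e = {last vs, hd vs}\<close> by blast
qed

lemma every_cut_crossed_spanning_tree:
  assumes "finite V" "is_graph V E" "every_cut_crossed V E" "card E < card V"
  shows "is_spanning_tree V E"
proof -
  have "finite E"
    using assms(1,2) unfolding is_graph_def by (intro finite_subset[of E "Pow V"]) auto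
  have "\<not> has_cycle E"
  proof
    assume "has_cycle E"
    then obtain e where "e \<in> E" "every_cut_crossed V (E - {e})"
      using every_cut_crossed_Diff_cycle_edge[OF assms(2,3)] by blast
    moreover have "is_graph V (E - {e})" using assms(2) unfolding is_graph_def by auto
    ultimately have "card V \<le> card (E - {e}) + 1"
      using every_cut_crossed_card_le[OF assms(1)] by blast
    also have "\<dots> = card E" using card_Suc_Diff1[OF \<open>finite E\<close> \<open>e \<in> E\<close>] by linarith
    finally show False using assms(4) by simp
  qed
  then show ?thesis
    using assms(2,3) every_cut_crossed_connected unfolding is_spanning_tree_def by blast
qed

lemma acyclic_finite_ex_sink:
  assumes "acyclic R" "finite C" "C \<noteq> {}"
  shows "\<exists>x\<in>C. \<forall>y\<in>C. (x, y) \<notin> R\<^sup>+"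
proof -
  let ?Q = "R\<^sup>+ \<inter> C \<times> C"
  have "acyclic (R\<^sup>+)" using assms(1) unfolding acyclic_def by simp
  then have "acyclic ?Q" by (rule acyclic_subset) (rule Int_lower1)
  moreover have "finite ?Q" using assms(2) by (simp add: finite_subset)
  ultimately have "wf (?Q\<inverse>)" by (intro finite_acyclic_wf_converse)
  then obtain x where "x \<in> C" and sink: "\<forall>y. (y, x) \<in> ?Q\<inverse> \<longrightarrow> y \<notin> C"
    using assms(3) unfolding wf_eq_minimal by blast
  then show ?thesis by blast
qed

lemma mem_skeleton_iff: "s \<in> skeleton n k \<longleftrightarrow> s \<noteq> {} \<and> s \<subseteq> {0..n} \<and> card s \<le> Suc k"
  by (auto simp: skeleton_def simplex_full_def)

lemma finite_skeleton: "finite (skeleton n k)"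
  by (rule finite_subset[of _ "Pow {0..n}"]) (auto simp: mem_skeleton_iff subset_iff)

lemma finite_skeleton_simplex: "s \<in> skeleton n k \<Longrightarrow> finite s"
  unfolding mem_skeleton_iff using finite_subset by blast

lemma hasse_edge_insert:
  assumes "(s, t) \<in> hasse_edges K"
  obtains v where "v \<notin> s" "t = insert v s"
proof -
  have "s \<subset> t" "card t = Suc (card s)" using assms unfolding hasse_edges_def by auto
  then have "finite t" by (metis card.infinite nat.distinct(1))
  moreover have "finite s" using \<open>finite t\<close> \<open>s \<subset> t\<close> finite_subset by blast
  ultimately have "card (t - s) = 1" using \<open>s \<subset> t\<close> \<open>card t = Suc (card s)\<close>
    by (simp add: card_Diff_subset)
  then obtain v where "t - s = {v}" by (rule card_1_singletonE)
  then show ?thesis using that \<open>s \<subset> t\<close> by blast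
qed

lemma mem_critical_iff: "s \<in> critical K W \<longleftrightarrow> s \<in> K \<and> (\<nexists>p. p \<in> W \<and> (s = fst p \<or> s = snd p))"
  unfolding critical_def by blast

lemma is_matching_pair_eq:
  assumes "is_matching K W" "p \<in> W" "q \<in> W" "fst p = fst q \<or> snd p = snd q"
  shows "p = q"
proof (rule ccontr)
  assume "p \<noteq> q"
  moreover have "\<forall>p\<in>W. \<forall>q\<in>W. p \<noteq> q \<longrightarrow> {fst p, snd p} \<inter> {fst q, snd q} = {}"
    using assms(1) unfolding is_matching_def by (rule conjunct2)
  ultimately have "{fst p, snd p} \<inter> {fst q, snd q} = {}" using assms(2,3) by blast
  with assms(4) show False by auto
qed

lemma modified_hasse_trancl_via_lower:
  assumes "is_matching K W" "(s, x) \<in> W" "(s, y) \<in> hasse_edges K" "y \<noteq> x"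
  shows "(x, y) \<in> (modified_hasse K W)\<^sup>+"
proof -
  have "(s, y) \<notin> W"
    using is_matching_pair_eq[OF assms(1,2), of "(s, y)"] assms(4) by auto
  then have "(x, s) \<in> modified_hasse K W" "(s, y) \<in> modified_hasse K W"
    using assms(2,3) unfolding modified_hasse_def by auto
  then show ?thesis by (rule trancl_into_trancl[OF r_into_trancl])
qed

lemma modified_hasse_trancl_via_upper:
  assumes "is_matching K W" "(a, t) \<in> W" "(b, t) \<in> hasse_edges K" "b \<noteq> a"
  shows "(b, a) \<in> (modified_hasse K W)\<^sup>+"
proof -
  have "(b, t) \<notin> W"
    using is_matching_pair_eq[OF assms(1,2), of "(b, t)"] assms(4) by auto
  then have "(b, t) \<in> modified_hasse K W" "(t, a) \<in> modified_hasse K W"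
    using assms(2,3) unfolding modified_hasse_def by auto
  then show ?thesis by (rule trancl_into_trancl[OF r_into_trancl])
qed

lemma acyclic_matching_ex_critical_vertex:
  assumes "is_acyclic_matching (skeleton n k) W"
  shows "\<exists>v\<le>n. {v} \<in> critical (skeleton n k) W"
proof (rule ccontr)
  \<comment> \<open>A vertex {v} can only be matched with an edge {v, w}, which gives the gradient path
    {w} \<rightarrow> {v, w} \<rightarrow> {v}; so a vertex that is a source among the vertices is critical.\<close>
  assume no_critical_vertex: "\<not> ?thesis"
  let ?K = "skeleton n k"
  let ?R = "modified_hasse ?K W"
  have M: "is_matching ?K W" and "acyclic (?R\<inverse>)"
    using assms unfolding is_acyclic_matching_def by simp_all
  then obtain v where "v \<le> n" and source: "\<And>w. w \<le> n \<Longrightarrow> ({w}, {v}) \<notin> ?R\<^sup>+"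
    using acyclic_finite_ex_sink[of "?R\<inverse>" "(\<lambda>v. {v}) ` {0..n}"] by (auto simp: trancl_converse)
  then have "{v} \<in> ?K" by (simp add: mem_skeleton_iff)
  with no_critical_vertex \<open>v \<le> n\<close> obtain p where p: "p \<in> W" "{v} = fst p \<or> {v} = snd p"
    unfolding mem_critical_iff by blast
  obtain s t where "p = (s, t)" by (cases p)
  have "(s, t) \<in> hasse_edges ?K" using M p \<open>p = (s, t)\<close> unfolding is_matching_def by auto
  then obtain w where "w \<notin> s" "t = insert w s" by (rule hasse_edge_insert)
  have "s \<in> ?K" "t \<in> ?K" using \<open>(s, t) \<in> hasse_edges ?K\<close> unfolding hasse_edges_def by auto
  then have "s = {v}" using p \<open>p = (s, t)\<close> \<open>t = insert w s\<close>
    by (auto simp: mem_skeleton_iff subset_singleton_iff)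
  have "{w} \<in> ?K" using \<open>t \<in> ?K\<close> \<open>t = insert w s\<close> by (simp add: mem_skeleton_iff)
  moreover have "{w} \<subset> t" "card t = Suc (card {w})"
    using \<open>w \<notin> s\<close> \<open>t = insert w s\<close> \<open>s = {v}\<close> by auto
  ultimately have "({w}, t) \<in> hasse_edges ?K" using \<open>t \<in> ?K\<close> unfolding hasse_edges_def by simp
  then have "({w}, {v}) \<in> ?R\<^sup>+"
    using modified_hasse_trancl_via_upper[OF M] p \<open>p = (s, t)\<close> \<open>s = {v}\<close> \<open>w \<notin> s\<close> by auto
  moreover have "w \<le> n" using \<open>t \<in> ?K\<close> \<open>t = insert w s\<close> by (auto simp: mem_skeleton_iff)
  ultimately show False using source by blast
qed

definition cone_matching :: "nat \<Rightarrow> nat \<Rightarrow> (nat set \<times> nat set) set" where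
  "cone_matching n k = {(s, insert 0 s) | s. s \<in> skeleton n k \<and> 0 \<notin> s \<and> card s \<le> k}"

lemma cone_matching_is_matching: "is_matching (skeleton n k) (cone_matching n k)"
  unfolding is_matching_def
proof (intro conjI ballI impI subsetI)
  fix p assume "p \<in> cone_matching n k"
  then obtain s where p: "p = (s, insert 0 s)" and s: "s \<in> skeleton n k" "0 \<notin> s" "card s \<le> k"
    unfolding cone_matching_def by blast
  have "finite s" using s(1) by (rule finite_skeleton_simplex)
  then have "card (insert 0 s) = Suc (card s)" using s(2) by simp
  moreover have "insert 0 s \<in> skeleton n k" using s \<open>card (insert 0 s) = Suc (card s)\<close>
    by (simp add: mem_skeleton_iff)
  ultimately show "p \<in> hasse_edges (skeleton n k)"
    using p s unfolding hasse_edges_def by auto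
next
  fix p q assume "p \<in> cone_matching n k" "q \<in> cone_matching n k" "p \<noteq> q"
  then obtain s t where "p = (s, insert 0 s)" "q = (t, insert 0 t)" "0 \<notin> s" "0 \<notin> t" "s \<noteq> t"
    unfolding cone_matching_def by blast
  moreover have "insert 0 s \<noteq> insert 0 t"
    using \<open>0 \<notin> s\<close> \<open>0 \<notin> t\<close> \<open>s \<noteq> t\<close> by (metis Diff_insert_absorb)
  ultimately show "{fst p, snd p} \<inter> {fst q, snd q} = {}" by auto
qed

lemma cone_matching_acyclic: "acyclic (modified_hasse (skeleton n k) (cone_matching n k))"
proof -
  let ?K = "skeleton n k"
  define \<phi> :: "nat set \<Rightarrow> nat" where "\<phi> s = card s + (if 0 \<in> s then 0 else 2)" for s
  have "\<phi> a < \<phi> b" if ab: "(a, b) \<in> modified_hasse ?K (cone_matching n k)" for a b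
  proof -
    consider "(a, b) \<in> hasse_edges ?K" "(a, b) \<notin> cone_matching n k"
      | "(b, a) \<in> cone_matching n k"
      using ab unfolding modified_hasse_def by auto
    then show ?thesis
    proof cases
      case 1
      then obtain v where "v \<notin> a" "b = insert v a" by (elim hasse_edge_insert)
      have "a \<in> ?K" "b \<in> ?K" using 1(1) unfolding hasse_edges_def by auto
      then have "finite a" by (simp add: finite_skeleton_simplex)
      have "v \<noteq> 0 \<or> 0 \<in> a"
      proof (rule ccontr)
        assume "\<not> (v \<noteq> 0 \<or> 0 \<in> a)"
        then have "(a, b) \<in> cone_matching n k"
          using \<open>a \<in> ?K\<close> \<open>b \<in> ?K\<close> \<open>b = insert v a\<close> \<open>finite a\<close>
          unfolding cone_matching_def by (auto simp: mem_skeleton_iff)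
        with 1(2) show False by contradiction
      qed
      then show ?thesis using \<open>v \<notin> a\<close> \<open>b = insert v a\<close> \<open>finite a\<close> unfolding \<phi>_def by auto
    next
      case 2
      then obtain s where "b = s" "a = insert 0 s" "s \<in> ?K" "0 \<notin> s"
        unfolding cone_matching_def by blast
      then show ?thesis unfolding \<phi>_def by (simp add: finite_skeleton_simplex)
    qed
  qed
  then have "modified_hasse ?K (cone_matching n k) \<subseteq> inv_image less_than \<phi>" by auto
  moreover have "acyclic (inv_image less_than \<phi>)" by (intro wf_acyclic wf_inv_image wf_less_than)
  ultimately show ?thesis by (rule acyclic_subset[rotated])
qed

lemma critical_cone_matching_subset:
  "critical (skeleton n k) (cone_matching n k) \<subseteq> insert {0} {s. s \<subseteq> {1..n} \<and> card s = Suc k}"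
proof
  fix s assume s: "s \<in> critical (skeleton n k) (cone_matching n k)"
  then have "s \<in> skeleton n k" and unmatched: "\<And>t. (s, t) \<notin> cone_matching n k \<and> (t, s) \<notin> cone_matching n k"
    unfolding mem_critical_iff by fastforce+
  from \<open>s \<in> skeleton n k\<close> have "finite s" by (rule finite_skeleton_simplex)
  show "s \<in> insert {0} {s. s \<subseteq> {1..n} \<and> card s = Suc k}"
  proof (cases "0 \<in> s")
    case True
    have "s - {0} \<notin> skeleton n k"
    proof
      assume "s - {0} \<in> skeleton n k"
      then have "(s - {0}, insert 0 (s - {0})) \<in> cone_matching n k"
        using \<open>s \<in> skeleton n k\<close> \<open>finite s\<close> True unfolding cone_matching_def
        by (auto simp: mem_skeleton_iff card_Diff_singleton)
      with unmatched True show False by (simp add: insert_absorb)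
    qed
    moreover have "card (s - {0}) \<le> card s" by (rule card_Diff1_le)
    ultimately have "s - {0} = {}" using \<open>s \<in> skeleton n k\<close> by (auto simp: mem_skeleton_iff)
    then show ?thesis using True by auto
  next
    case False
    have "\<not> card s \<le> k"
      using unmatched[of "insert 0 s"] \<open>s \<in> skeleton n k\<close> False unfolding cone_matching_def by blast
    then have "card s = Suc k" using \<open>s \<in> skeleton n k\<close> by (simp add: mem_skeleton_iff)
    moreover have "s \<subseteq> {1..n}"
    proof
      fix x assume "x \<in> s"
      then have "x \<noteq> 0" "x \<le> n" using False \<open>s \<in> skeleton n k\<close> by (auto simp: mem_skeleton_iff)
      then show "x \<in> {1..n}" by simp
    qed
    ultimately show ?thesis by simp
  qed
qed

lemma card_critical_cone_matching:
  "card (critical (skeleton n k) (cone_matching n k)) \<le> Suc (n choose Suc k)"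
proof -
  let ?X = "{s. s \<subseteq> {1..n} \<and> card s = Suc k}"
  have "finite ?X" by (rule finite_subset[of _ "Pow {1..n}"]) auto
  have "card (critical (skeleton n k) (cone_matching n k)) \<le> card (insert {0} ?X)"
    using critical_cone_matching_subset \<open>finite ?X\<close> by (intro card_mono) auto
  also have "\<dots> \<le> Suc (card ?X)" by (simp add: card_insert_if)
  also have "card ?X = n choose Suc k" by (subst n_subsets) auto
  finally show ?thesis .
qed

lemma card_critical_top_simplices_le:
  assumes "1 \<le> k" "is_optimal_matching (skeleton n k) W"
  shows "card {u \<in> critical (skeleton n k) W. card u = Suc k} \<le> n choose Suc k"
proof -
  let ?K = "skeleton n k"
  let ?U = "{u \<in> critical ?K W. card u = Suc k}"
  have "is_acyclic_matching ?K W" using assms(2) unfolding is_optimal_matching_def by simp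
  then obtain v where "{v} \<in> critical ?K W" using acyclic_matching_ex_critical_vertex by blast
  moreover have "{v} \<notin> ?U" using assms(1) by simp
  moreover have "finite (critical ?K W)"
    using finite_skeleton by (rule finite_subset[rotated]) (auto simp: critical_def)
  moreover have "finite ?U" using \<open>finite (critical ?K W)\<close> by simp
  ultimately have "Suc (card ?U) = card (insert {v} ?U)" by simp
  also have "\<dots> \<le> card (critical ?K W)"
    using \<open>finite (critical ?K W)\<close> \<open>{v} \<in> critical ?K W\<close> by (intro card_mono) auto
  also have "\<dots> \<le> card (critical ?K (cone_matching n k))"
    using assms(2) cone_matching_is_matching cone_matching_acyclic
    unfolding is_optimal_matching_def is_acyclic_matching_def by blast
  also have "\<dots> \<le> Suc (n choose Suc k)" by (rule card_critical_cone_matching)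
  finally show ?thesis by simp
qed

lemma inj_on_Diff_singleton: "inj_on (\<lambda>i. A - {i}) A"
  by (rule inj_onI) blast

lemma facets_eq_image:
  assumes "1 \<le> n"
  shows "facets n = (\<lambda>i. {0..n} - {i}) ` {0..n}"
proof (intro equalityI subsetI)
  fix F assume "F \<in> facets n"
  then have F: "F \<subseteq> {0..n}" "card F = n" unfolding facets_def simplex_full_def by auto
  then have "card ({0..n} - F) = 1" by (simp add: card_Diff_subset finite_subset)
  then obtain i where i: "{0..n} - F = {i}" by (rule card_1_singletonE)
  then have "F = {0..n} - {i}" "i \<in> {0..n}" using F(1) by auto
  then show "F \<in> (\<lambda>i. {0..n} - {i}) ` {0..n}" by blast
next
  fix F assume "F \<in> (\<lambda>i. {0..n} - {i}) ` {0..n}"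
  then obtain i where "i \<le> n" "F = {0..n} - {i}" by auto
  then have "card F = n" by simp
  with assms have "F \<noteq> {}" using card_gt_0_iff by force
  with \<open>card F = n\<close> \<open>F = {0..n} - {i}\<close> show "F \<in> facets n"
    unfolding facets_def simplex_full_def by auto
qed

lemma card_facets: "1 \<le> n \<Longrightarrow> card (facets n) = Suc n"
  by (simp add: facets_eq_image card_image inj_on_Diff_singleton)

lemma card_ridge: "i \<le> n \<Longrightarrow> j \<le> n \<Longrightarrow> i \<noteq> j \<Longrightarrow> card ({0..n} - {i, j}) = n - 1"
  by (simp add: card_Diff_subset)

lemma ridge_in_skeleton:
  assumes "2 \<le> n" "i \<le> n" "j \<le> n" "i \<noteq> j"
  shows "{0..n} - {i, j} \<in> skeleton n (n - 2)"
proof -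
  have "card ({0..n} - {i, j}) = n - 1" using assms(2-4) by (rule card_ridge)
  moreover from this assms(1) have "{0..n} - {i, j} \<noteq> {}" using card_gt_0_iff by force
  ultimately show ?thesis using assms(1) by (simp add: mem_skeleton_iff)
qed

lemma ridge_cases:
  assumes "1 \<le> n" "u \<subseteq> {0..n}" "card u = n - 1"
  obtains i j where "i \<le> n" "j \<le> n" "i \<noteq> j" "u = {0..n} - {i, j}"
proof -
  have "card ({0..n} - u) = 2" using assms by (simp add: card_Diff_subset finite_subset)
  then obtain i j where ij: "{0..n} - u = {i, j}" "i \<noteq> j" by (auto simp: card_2_iff)
  then have "i \<in> {0..n}" "j \<in> {0..n}" by blast+
  moreover have "u = {0..n} - {i, j}" using ij(1) assms(2) by blast
  ultimately show ?thesis using that ij(2) by simp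
qed

lemma edge_of_ridge:
  assumes "i \<le> n" "j \<le> n" "i \<noteq> j"
  shows "edge_of n ({0..n} - {i, j}) = {{0..n} - {i}, {0..n} - {j}}"
proof -
  have "1 \<le> n" using assms by linarith
  have "{0..n} - {i, j} \<subseteq> {0..n} - {l} \<longleftrightarrow> l \<in> {i, j}" if "l \<le> n" for l
    using that by auto
  then show ?thesis
    using assms unfolding edge_of_def facets_eq_image[OF \<open>1 \<le> n\<close>] by auto
qed

lemma inj_on_edge_of:
  assumes "1 \<le> n" "R \<subseteq> {u. u \<subseteq> {0..n} \<and> card u = n - 1}"
  shows "inj_on (edge_of n) R"
proof -
  have "\<Inter> (edge_of n u) = u" if "u \<in> R" for u
  proof -
    obtain i j where "i \<le> n" "j \<le> n" "i \<noteq> j" "u = {0..n} - {i, j}"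
      using ridge_cases[OF assms(1)] assms(2) \<open>u \<in> R\<close> by blast
    then show ?thesis using edge_of_ridge by auto
  qed
  then show ?thesis by (intro inj_onI) (metis (no_types))
qed

lemma is_graph_edge_of:
  assumes "1 \<le> n" "R \<subseteq> {u. u \<subseteq> {0..n} \<and> card u = n - 1}"
  shows "is_graph (facets n) (edge_of n ` R)"
  unfolding is_graph_def
proof
  fix e assume "e \<in> edge_of n ` R"
  then obtain u where "u \<in> R" "e = edge_of n u" by blast
  moreover obtain i j where "i \<le> n" "j \<le> n" "i \<noteq> j" "u = {0..n} - {i, j}"
    using ridge_cases[OF assms(1)] assms(2) \<open>u \<in> R\<close> by blast
  ultimately have e_eq: "e = {{0..n} - {i}, {0..n} - {j}}" by (simp add: edge_of_ridge)
  have "i \<in> {0..n} - {j}" "i \<notin> {0..n} - {i}" using \<open>i \<le> n\<close> \<open>i \<noteq> j\<close> by simp_all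
  then have "{0..n} - {i} \<noteq> {0..n} - {j}" by blast
  moreover have "{0..n} - {i} \<in> facets n" "{0..n} - {j} \<in> facets n"
    using \<open>i \<le> n\<close> \<open>j \<le> n\<close> unfolding facets_eq_image[OF assms(1)] by simp_all
  ultimately show "e \<subseteq> facets n \<and> card e = 2" using e_eq by simp
qed

lemma noncritical_top_simplex_matched_down:
  assumes "is_matching (skeleton n k) W" "x \<in> skeleton n k" "card x = Suc k"
    "x \<notin> critical (skeleton n k) W"
  obtains v where "v \<in> x" "(x - {v}, x) \<in> W"
proof -
  obtain p where "p \<in> W" "x = fst p \<or> x = snd p"
    using assms(2,4) unfolding mem_critical_iff by blast
  then obtain s t where st: "(s, t) \<in> W" "x = s \<or> x = t" by (cases p) auto
  then have "(s, t) \<in> hasse_edges (skeleton n k)"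
    using assms(1) unfolding is_matching_def by blast
  then have "s \<in> skeleton n k" "t \<in> skeleton n k" unfolding hasse_edges_def by simp_all
  obtain v where "v \<notin> s" "t = insert v s"
    using \<open>(s, t) \<in> hasse_edges _\<close> by (rule hasse_edge_insert)
  have "x \<noteq> s"
  proof
    assume "x = s"
    then have "card t = Suc (Suc k)"
      using \<open>v \<notin> s\<close> \<open>t = insert v s\<close> assms(3) finite_skeleton_simplex[OF \<open>s \<in> _\<close>] by simp
    with \<open>t \<in> skeleton n k\<close> show False by (simp add: mem_skeleton_iff)
  qed
  with st have "x = t" by simp
  moreover have "x - {v} = s" using \<open>x = t\<close> \<open>v \<notin> s\<close> \<open>t = insert v s\<close> by simp
  ultimately show ?thesis using that[of v] \<open>(s, t) \<in> W\<close> \<open>t = insert v s\<close> by simp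
qed

lemma critical_ridge_across_partition:
  assumes "2 \<le> n" "is_acyclic_matching (skeleton n (n - 2)) W"
    and "T \<subseteq> {0..n}" "i\<^sub>0 \<in> T" "j\<^sub>0 \<in> {0..n} - T"
  shows "\<exists>i\<in>T. \<exists>j\<in>{0..n} - T. {0..n} - {i, j} \<in> critical (skeleton n (n - 2)) W"
proof (rule ccontr)
  assume no_critical: "\<not> ?thesis"
  define A where "A = {0..n :: nat}"
  let ?K = "skeleton n (n - 2)"
  let ?R = "modified_hasse ?K W"
  define C where "C = {A - {i, j} | i j. i \<in> T \<and> j \<in> A - T}"
  have M: "is_matching ?K W" and "acyclic ?R"
    using assms(2) unfolding is_acyclic_matching_def by simp_all
  moreover have "finite C" by (rule finite_subset[of _ "Pow A"]) (auto simp: C_def A_def)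
  moreover have "C \<noteq> {}" using assms(4,5) unfolding C_def A_def by blast
  ultimately obtain x where "x \<in> C" and sink: "\<forall>y\<in>C. (x, y) \<notin> ?R\<^sup>+"
    using acyclic_finite_ex_sink by blast
  then obtain i j where ij: "i \<in> T" "j \<in> A - T" "x = A - {i, j}" unfolding C_def by blast
  have "i \<le> n" "j \<le> n" "i \<noteq> j" using ij(1,2) assms(3) unfolding A_def by auto
  then have "x \<in> ?K" "card x = n - 1"
    using ridge_in_skeleton[OF assms(1)] card_ridge ij(3) unfolding A_def by simp_all
  moreover have "x \<notin> critical ?K W" using no_critical ij unfolding A_def by blast
  moreover have "n - 1 = Suc (n - 2)" using assms(1) by simp
  ultimately obtain v where "v \<in> x" "(x - {v}, x) \<in> W"
    using noncritical_top_simplex_matched_down[OF M] by metis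
  \<comment> \<open>replacing by v whichever of i, j lies on the same side of T as v gives another ridge of C,
    which is reached from x through x - {v}\<close>
  obtain a b where ab: "a \<in> T" "b \<in> A - T" "v \<in> {a, b}" "{a, b} \<subseteq> {i, j, v}"
  proof (cases "v \<in> T")
    case True
    then show ?thesis using that[of v j] ij(2) by simp
  next
    case False
    then show ?thesis using that[of i v] ij(1,3) \<open>v \<in> x\<close> by simp
  qed
  define y where "y = A - {a, b}"
  have "a \<le> n" "b \<le> n" "a \<noteq> b" using ab(1,2) assms(3) unfolding A_def by auto
  then have "y \<in> ?K" "card y = n - 1"
    using ridge_in_skeleton[OF assms(1)] card_ridge unfolding y_def A_def by simp_all
  have "x - {v} \<in> ?K"
    using M \<open>(x - {v}, x) \<in> W\<close> unfolding is_matching_def hasse_edges_def by blast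
  moreover have "card (x - {v}) = n - 2"
    using \<open>card x = n - 1\<close> \<open>v \<in> x\<close> finite_skeleton_simplex[OF \<open>x \<in> ?K\<close>] by simp
  moreover have "x - {v} \<subseteq> y" using ab(4) ij(3) unfolding y_def by blast
  ultimately have "(x - {v}, y) \<in> hasse_edges ?K"
    using \<open>y \<in> ?K\<close> \<open>card y = n - 1\<close> assms(1) unfolding hasse_edges_def by auto
  moreover have "y \<noteq> x" using \<open>v \<in> x\<close> ab(3) unfolding y_def by blast
  ultimately have "(x, y) \<in> ?R\<^sup>+"
    by (rule modified_hasse_trancl_via_lower[OF M \<open>(x - {v}, x) \<in> W\<close>])
  moreover have "y \<in> C" using ab(1,2) unfolding C_def y_def by blast
  ultimately show False using sink by blast
qed

lemma critical_ridges_every_cut_crossed: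
  assumes "2 \<le> n" "is_acyclic_matching (skeleton n (n - 2)) W"
  shows "every_cut_crossed (facets n)
           (edge_of n ` {u \<in> critical (skeleton n (n - 2)) W. card u = n - 1})"
  unfolding every_cut_crossed_def
proof (intro allI impI)
  let ?U = "{u \<in> critical (skeleton n (n - 2)) W. card u = n - 1}"
  fix S assume S: "S \<subseteq> facets n \<and> S \<noteq> {} \<and> S \<noteq> facets n"
  have facets: "facets n = (\<lambda>i. {0..n} - {i}) ` {0..n}"
    using assms(1) by (simp add: facets_eq_image)
  define T where "T = {i \<in> {0..n}. {0..n} - {i} \<in> S}"
  obtain F G where "F \<in> S" "G \<in> facets n - S" using S by blast
  then obtain i\<^sub>0 j\<^sub>0 where "i\<^sub>0 \<in> {0..n}" "F = {0..n} - {i\<^sub>0}" "j\<^sub>0 \<in> {0..n}" "G = {0..n} - {j\<^sub>0}"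
    using S unfolding facets by blast
  then have "i\<^sub>0 \<in> T" "j\<^sub>0 \<in> {0..n} - T"
    using \<open>F \<in> S\<close> \<open>G \<in> facets n - S\<close> unfolding T_def by simp_all
  moreover have "T \<subseteq> {0..n}" unfolding T_def by blast
  ultimately obtain i j where "i \<in> T" "j \<in> {0..n} - T"
    and crit: "{0..n} - {i, j} \<in> critical (skeleton n (n - 2)) W"
    using critical_ridge_across_partition[OF assms] by blast
  then have "i \<le> n" "j \<le> n" "i \<noteq> j" unfolding T_def by auto
  then have "{0..n} - {i, j} \<in> ?U" using crit card_ridge by simp
  then have "edge_of n ({0..n} - {i, j}) \<in> edge_of n ` ?U" by (rule imageI)
  then have "{{0..n} - {i}, {0..n} - {j}} \<in> edge_of n ` ?U"
    using edge_of_ridge[OF \<open>i \<le> n\<close> \<open>j \<le> n\<close> \<open>i \<noteq> j\<close>] by simp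
  moreover have "{0..n} - {i} \<in> S" using \<open>i \<in> T\<close> unfolding T_def by simp
  moreover have "{0..n} - {j} \<in> facets n - S"
    using \<open>j \<in> {0..n} - T\<close> unfolding T_def facets by simp
  ultimately show "\<exists>a\<in>S. \<exists>b\<in>facets n - S. {a, b} \<in> edge_of n ` ?U" by blast
qed

theorem mainTheorem3:
  fixes n :: nat and W :: "(nat set \<times> nat set) set"
  assumes "n \<ge> 3"
    and "is_optimal_matching (skeleton n (n - 2)) W"
  defines "U \<equiv> {u \<in> critical (skeleton n (n - 2)) W. card u = n - 1}"
  shows "card U = n \<and> is_spanning_tree (facets n) (edge_of n ` U)"
proof -
  have "Suc (n - 2) = n - 1" "n choose (n - 1) = n"
    using assms(1) by (simp_all add: binomial_symmetric)
  then have "card U \<le> n"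
    using card_critical_top_simplices_le[of "n - 2" n W] assms(1,2) unfolding U_def by simp
  have ridges: "U \<subseteq> {u. u \<subseteq> {0..n} \<and> card u = n - 1}"
    unfolding U_def critical_def by (auto simp: mem_skeleton_iff)
  have "1 \<le> n" using assms(1) by simp
  have graph: "is_graph (facets n) (edge_of n ` U)"
    using \<open>1 \<le> n\<close> ridges by (rule is_graph_edge_of)
  have card_E: "card (edge_of n ` U) = card U"
    using inj_on_edge_of[OF \<open>1 \<le> n\<close> ridges] by (rule card_image)
  have "is_acyclic_matching (skeleton n (n - 2)) W"
    using assms(2) unfolding is_optimal_matching_def by simp
  then have cut: "every_cut_crossed (facets n) (edge_of n ` U)"
    using critical_ridges_every_cut_crossed assms(1) unfolding U_def by simp
  have "finite (facets n)" using \<open>1 \<le> n\<close> by (simp add: facets_eq_image)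
  have card_V: "card (facets n) = Suc n" using \<open>1 \<le> n\<close> by (rule card_facets)
  have "card (facets n) \<le> card (edge_of n ` U) + 1"
    using \<open>finite (facets n)\<close> graph cut by (rule every_cut_crossed_card_le)
  with \<open>card U \<le> n\<close> have "card U = n" using card_E card_V by linarith
  moreover have "is_spanning_tree (facets n) (edge_of n ` U)"
    using \<open>finite (facets n)\<close> graph cut
    by (rule every_cut_crossed_spanning_tree) (use card_E card_V \<open>card U \<le> n\<close> in linarith)
  ultimately show ?thesis ..
qed

end
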